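(* Assume the Standing setting. Then there exist constants $a,b_0,b_1\ge0$, independent of $\epsilon$, $\eta$, $t$, such that for every $\epsilon\in(0,\epsilon_*]$, $$\|H_1H^{-1/2}(\epsilon,\eta,t)\|\le a+b_0+b_1\epsilon\quad\text{for all }\eta>0,\ t\in\mathbb R.$$
   Context: Standing setting. $\mathcal H$ is a separable Hilbert space. $H_0$ is self-adjoint with $H_0\ge 1+\gamma_0$ for some $\gamma_0>0$. $H_1$ is self-adjoint and $H_0^{1/2}$-bounded, i.e. $\mathcal D(H_0^{1/2})\subset\mathcal D(H_1)$ and $H_1H_0^{-1/2}$ is bounded. $g\in C^1(\mathbb R)$ is real-valued with $\operatorname{supp} g'\subset(0,1)$ and $g(s)=0$ for $s<0$; set $M=\max_{s\in[0,1]}|g(s)|$. For $\epsilon>0,\eta>0,t\in\mathbb R$ put $H(\epsilon,\eta,t)=H_0+\epsilon g(\eta t)H_1$ on $\mathcal D(H_0)$ (self-adjoint there). $\epsilon_*>0$ is fixed so that $\frac{3\gamma_0+1}{\gamma_0}\epsilon_* M\|H_1H_0^{-1}\|<1$; then $\inf\sigma(H(\epsilon,\eta,t))\ge1$ for all $\epsilon\in(0,\epsilon_*]$, $\eta>0$, $t\in\mathbb R$. *)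

theory Defs
  imports "HOL-Analysis.Analysis"
begin

class complex_normed_vector = real_normed_vector +
  fixes scaleC :: "complex \<Rightarrow> 'a \<Rightarrow> 'a" (infixr \<open>*\<^sub>C\<close> 75)
  assumes scaleC_add_right: "c *\<^sub>C (x + y) = c *\<^sub>C x + c *\<^sub>C y"
    and scaleC_add_left: "(b + c) *\<^sub>C x = b *\<^sub>C x + c *\<^sub>C x"
    and scaleC_scaleC: "b *\<^sub>C (c *\<^sub>C x) = (b * c) *\<^sub>C x"
    and scaleC_of_real: "(complex_of_real r) *\<^sub>C x = r *\<^sub>R x"
    and norm_scaleC: "norm (c *\<^sub>C x) = cmod c * norm x"

text \<open>Complex Hilbert spaces are modelled as complex Banach spaces whose norm
satisfies the parallelogram law (Jordan--von Neumann); the inner product is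
recovered by polarization (antilinear in the first argument).\<close>

definition hilbert_norm :: "'a::{complex_normed_vector,banach} itself \<Rightarrow> bool" where
  "hilbert_norm (_::'a itself) \<longleftrightarrow>
     (\<forall>x y::'a. (norm (x + y))\<^sup>2 + (norm (x - y))\<^sup>2 = 2 * (norm x)\<^sup>2 + 2 * (norm y)\<^sup>2)"

definition separable_carrier :: "'a::topological_space itself \<Rightarrow> bool" where
  "separable_carrier (_::'a itself) \<longleftrightarrow> (\<exists>D::'a set. countable D \<and> closure D = UNIV)"

definition cinner :: "'a::complex_normed_vector \<Rightarrow> 'a \<Rightarrow> complex" where
  "cinner x y = (1/4) * (\<Sum>k<(4::nat). ((-\<i>) ^ k) * complex_of_real ((norm (x + (\<i> ^ k) *\<^sub>C y))\<^sup>2))"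

text \<open>A (possibly unbounded) linear operator is a pair (domain D, map T),
T being linear on the linear subspace D.\<close>

definition lin_op :: "'a::complex_normed_vector set \<Rightarrow> ('a \<Rightarrow> 'a) \<Rightarrow> bool" where
  "lin_op D T \<longleftrightarrow> 0 \<in> D \<and> (\<forall>x\<in>D. \<forall>y\<in>D. x + y \<in> D) \<and> (\<forall>c. \<forall>x\<in>D. c *\<^sub>C x \<in> D)
     \<and> (\<forall>x\<in>D. \<forall>y\<in>D. T (x + y) = T x + T y) \<and> (\<forall>c. \<forall>x\<in>D. T (c *\<^sub>C x) = c *\<^sub>C T x)"

text \<open>Self-adjoint: densely defined, D(T^*) = D(T) and T^* = T.\<close>

definition self_adjoint_op :: "'a::complex_normed_vector set \<Rightarrow> ('a \<Rightarrow> 'a) \<Rightarrow> bool" where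
  "self_adjoint_op D T \<longleftrightarrow> lin_op D T \<and> closure D = UNIV
     \<and> (\<forall>y. (\<exists>z. \<forall>x\<in>D. cinner (T x) y = cinner x z) \<longleftrightarrow> y \<in> D)
     \<and> (\<forall>x\<in>D. \<forall>y\<in>D. cinner (T x) y = cinner x (T y))"

definition op_ge :: "'a::complex_normed_vector set \<Rightarrow> ('a \<Rightarrow> 'a) \<Rightarrow> real \<Rightarrow> bool" where
  "op_ge D T c \<longleftrightarrow> (\<forall>x\<in>D. Re (cinner x (T x)) \<ge> c * (norm x)\<^sup>2)"

definition inv_sqrt_op :: "'a::complex_normed_vector set \<Rightarrow> ('a \<Rightarrow> 'a) \<Rightarrow> ('a \<Rightarrow> 'a)" where
  "inv_sqrt_op D T = (THE S. bounded_linear S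
      \<and> (\<forall>x. cinner x (S x) \<in> \<real> \<and> Re (cinner x (S x)) \<ge> 0)
      \<and> (\<forall>x. S (S x) \<in> D \<and> T (S (S x)) = x))"

definition Hpert :: "('a::complex_normed_vector \<Rightarrow> 'a) \<Rightarrow> ('a \<Rightarrow> 'a) \<Rightarrow> (real \<Rightarrow> real)
    \<Rightarrow> real \<Rightarrow> real \<Rightarrow> real \<Rightarrow> 'a \<Rightarrow> 'a" where
  "Hpert H0 H1 g \<epsilon> \<eta> t = (\<lambda>x. H0 x + (\<epsilon> * g (\<eta> * t)) *\<^sub>R H1 x)"

end

theory Submission
  imports Defs "HOL-Computational_Algebra.Formal_Power_Series"
begin

text \<open>
  Write \<open>S\<^sub>0 = H\<^sub>0\<^sup>-\<^sup>1\<^sup>/\<^sup>2\<close> and \<open>S = H\<^sup>-\<^sup>1\<^sup>/\<^sup>2\<close> for \<open>H = H\<^sub>0 + c H\<^sub>1\<close>,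
  \<open>c = \<epsilon> g(\<eta> t)\<close>, so that \<open>|c| \<le> \<epsilon>\<^sub>* M\<close>. Since \<open>H\<^sub>1 S\<^sub>0\<close> is bounded by some \<open>C\<close>, it suffices to
  factor \<open>S = S\<^sub>0 U\<close> with \<open>U\<close> bounded independently of \<open>\<epsilon>, \<eta>, t\<close>. For \<open>z \<in> D(H\<^sub>0)\<close>,
  \<open>\<langle>z, H z\<rangle> = \<parallel>H\<^sub>0\<^sup>1\<^sup>/\<^sup>2 z\<parallel>\<^sup>2 + c \<langle>z, H\<^sub>1 z\<rangle>\<close> and \<open>|\<langle>z, H\<^sub>1 z\<rangle>| \<le> C \<parallel>z\<parallel> \<parallel>H\<^sub>0\<^sup>1\<^sup>/\<^sup>2 z\<parallel>\<close>;
  together with \<open>\<parallel>z\<parallel>\<^sup>2 \<le> \<langle>z, H z\<rangle>\<close> this gives the form bound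
  \<open>\<parallel>H\<^sub>0\<^sup>1\<^sup>/\<^sup>2 z\<parallel>\<^sup>2 \<le> (2 + (\<epsilon>\<^sub>* M C)\<^sup>2) \<langle>z, H z\<rangle>\<close>, i.e. \<open>\<parallel>H\<^sub>0\<^sup>1\<^sup>/\<^sup>2 S\<parallel> \<le> (2 + (\<epsilon>\<^sub>* M C)\<^sup>2)\<^sup>1\<^sup>/\<^sup>2\<close>.
  So the bound holds with \<open>a = C (2 + (\<epsilon>\<^sub>* M C)\<^sup>2)\<^sup>1\<^sup>/\<^sup>2\<close> and \<open>b\<^sub>0 = b\<^sub>1 = 0\<close>.

  The operators involved exist for elementary reasons: the inner product is recovered from the
  parallelogram law, a self-adjoint \<open>T \<ge> 1\<close> is onto (its range is closed and its orthogonal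
  complement lies in the kernel of \<open>T\<close>), and the bounded positive operator \<open>T\<^sup>-\<^sup>1\<close> has a unique
  positive square root, given by the binomial series of \<open>\<surd>(1 - x)\<close>.
\<close>

lemma scaleC_one: "(1::complex) *\<^sub>C x = x"
  using scaleC_of_real[of 1 x] by simp

lemma scaleC_minus_one: "(-1::complex) *\<^sub>C x = - x"
  using scaleC_of_real[of "-1" x] by simp

lemma scaleC_zero_right: "c *\<^sub>C (0::'a::complex_normed_vector) = 0"
  using scaleC_add_right[of c 0 0] by simp

lemma scaleC_minus_right: "c *\<^sub>C (- x::'a::complex_normed_vector) = - (c *\<^sub>C x)"
  using scaleC_add_right[of c x "-x"]
  by (simp add: scaleC_zero_right eq_neg_iff_add_eq_0 add.commute)

lemma scaleC_diff_right: "c *\<^sub>C (x - y::'a::complex_normed_vector) = c *\<^sub>C x - c *\<^sub>C y"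
  using scaleC_add_right[of c x "-y"] by (simp add: scaleC_minus_right)

lemma scaleC_ii_ii: "\<i> *\<^sub>C (\<i> *\<^sub>C x) = - x"
  by (simp add: scaleC_scaleC scaleC_minus_one)

lemma scaleC_minus_ii: "(-\<i>) *\<^sub>C x = - (\<i> *\<^sub>C x)"
  by (metis scaleC_minus_one scaleC_scaleC mult_minus1)

lemma scaleC_scaleR_commute: "c *\<^sub>C (r *\<^sub>R x) = r *\<^sub>R (c *\<^sub>C x)"
  by (metis scaleC_of_real scaleC_scaleC mult.commute)

lemma bounded_linear_scaleC: "bounded_linear (\<lambda>x::'a::complex_normed_vector. c *\<^sub>C x)"
  by (rule bounded_linear_intro[where K="cmod c"])
    (auto simp: scaleC_add_right scaleC_scaleR_commute norm_scaleC)

lemma additive_bounded_imp_zero: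
  fixes h :: "real \<Rightarrow> real"
  assumes add: "\<And>a b. h (a + b) = h a + h b" and h1: "h 1 = 0"
    and bound: "\<And>r. \<bar>h r\<bar> \<le> C * \<bar>r\<bar>"
  shows "h r = 0"
proof -
  have h0: "h 0 = 0" using add[of 0 0] by simp
  have h_nat: "h (of_nat n * a) = of_nat n * h a" for n a
    by (induction n) (simp_all add: h0 add distrib_right)
  have h_int: "h (of_int k) = 0" for k
  proof -
    have "h (of_int k) + h (- of_int k) = 0" using add[of "of_int k" "- of_int k"] h0 by simp
    moreover have "h (of_int \<bar>k\<bar>) = 0" using h_nat[of "nat \<bar>k\<bar>" 1] h1 by simp
    ultimately show ?thesis by (cases "k \<ge> 0") auto
  qed
  have bound_mult: "of_nat n * \<bar>h r\<bar> \<le> \<bar>C\<bar>" for n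
  proof -
    define f where "f = of_nat n * r - of_int \<lfloor>of_nat n * r\<rfloor>"
    have f01: "0 \<le> f" "f \<le> 1" unfolding f_def by linarith+
    have "of_nat n * h r = h f + h (of_int \<lfloor>of_nat n * r\<rfloor>)"
      by (simp add: h_nat f_def flip: add)
    then have "of_nat n * h r = h f" by (simp add: h_int)
    moreover have "\<bar>h f\<bar> \<le> \<bar>C\<bar> * \<bar>f\<bar>"
      using bound[of f] by (meson abs_ge_self abs_ge_zero mult_right_mono order_trans)
    moreover have "\<bar>C\<bar> * \<bar>f\<bar> \<le> \<bar>C\<bar>" using f01 by (simp add: mult_left_le)
    ultimately show ?thesis by (simp add: abs_mult)
  qed
  show ?thesis
  proof (rule ccontr)
    assume "h r \<noteq> 0"
    then obtain n :: nat where "\<bar>C\<bar> / \<bar>h r\<bar> < of_nat n" using reals_Archimedean2 by blast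
    with \<open>h r \<noteq> 0\<close> bound_mult[of n] show False by (simp add: field_simps)
  qed
qed

section \<open>The inner product of a Hilbert norm\<close>

definition rinner :: "'a::real_normed_vector \<Rightarrow> 'a \<Rightarrow> real" where
  "rinner x y = ((norm (x + y))\<^sup>2 - (norm (x - y))\<^sup>2) / 4"

lemma rinner_commute: "rinner x y = rinner y x"
  by (simp add: rinner_def add.commute norm_minus_commute)

lemma rinner_self: "rinner x x = (norm x)\<^sup>2"
proof -
  have "norm (x + x) = 2 * norm x"
    by (metis mult_2 norm_scaleR real_norm_def scaleR_2 abs_numeral)
  then show ?thesis by (simp add: rinner_def power2_eq_square)
qed

lemma rinner_zero_left [simp]: "rinner 0 y = 0"
  and rinner_zero_right [simp]: "rinner y 0 = 0"
  by (simp_all add: rinner_def)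

lemma abs_rinner_le: "\<bar>rinner x y\<bar> \<le> norm x * norm y"
proof -
  have "\<bar>norm x - norm y\<bar> \<le> norm (x - y)" by (rule norm_triangle_ineq3)
  then have "(norm x - norm y)\<^sup>2 \<le> (norm (x - y))\<^sup>2"
    by (metis abs_le_square_iff abs_norm_cancel)
  moreover have "\<bar>norm x - norm y\<bar> \<le> norm (x + y)"
    using norm_triangle_ineq3[of x "-y"] by simp
  then have "(norm x - norm y)\<^sup>2 \<le> (norm (x + y))\<^sup>2"
    by (metis abs_le_square_iff abs_norm_cancel)
  moreover have "(norm (x + y))\<^sup>2 \<le> (norm x + norm y)\<^sup>2" "(norm (x - y))\<^sup>2 \<le> (norm x + norm y)\<^sup>2"
    by (simp_all add: power_mono norm_triangle_ineq norm_triangle_ineq4)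
  ultimately show ?thesis
    unfolding rinner_def by (auto simp: power2_eq_square algebra_simps abs_le_iff)
qed

lemma cinner_rinner: "cinner x y = Complex (rinner x y) (- rinner x (\<i> *\<^sub>C y))"
proof -
  have sum4: "(\<Sum>k<(4::nat). f k) = f 0 + f 1 + f 2 + f 3" for f :: "nat \<Rightarrow> complex"
    by (simp add: eval_nat_numeral)
  have i3: "\<i> ^ 3 = - \<i>" "(-\<i>) ^ 3 = \<i>" by (simp_all add: eval_nat_numeral)
  have "cinner x y = (1/4) * (complex_of_real ((norm (x + y))\<^sup>2)
      - \<i> * complex_of_real ((norm (x + \<i> *\<^sub>C y))\<^sup>2) - complex_of_real ((norm (x - y))\<^sup>2)
      + \<i> * complex_of_real ((norm (x - \<i> *\<^sub>C y))\<^sup>2))"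
    unfolding cinner_def sum4 by (simp add: i3 scaleC_one scaleC_minus_one scaleC_minus_ii)
  then show ?thesis by (simp add: complex_eq_iff rinner_def field_simps)
qed

lemma quadratic_nonneg_discriminant:
  fixes a b c :: real
  assumes "c \<ge> 0" and nonneg: "\<And>t. 0 \<le> a + 2 * b * t + c * t\<^sup>2"
  shows "b\<^sup>2 \<le> a * c"
proof (cases "c = 0")
  case True
  then show ?thesis
    using nonneg[of "-(a+1)/(2*b)"] by (cases "b = 0") (simp_all add: field_simps)
next
  case False
  with \<open>c \<ge> 0\<close> have "c > 0" by simp
  with nonneg[of "-b/c"] show ?thesis by (simp add: field_simps power2_eq_square)
qed

context
  assumes hilb: "hilbert_norm TYPE('a::{complex_normed_vector,banach})"
begin

lemma parallelogram_law:
  "(norm (x + y))\<^sup>2 + (norm (x - y))\<^sup>2 = 2 * (norm x)\<^sup>2 + 2 * (norm (y::'a))\<^sup>2"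
  using hilb unfolding hilbert_norm_def by blast

lemma rinner_add_diff_left: "rinner (x + x') y + rinner (x - x') y = 2 * rinner x (y::'a)"
proof -
  have "(norm (x + x' + y))\<^sup>2 + (norm (x - x' + y))\<^sup>2 = 2 * (norm (x + y))\<^sup>2 + 2 * (norm x')\<^sup>2"
    using parallelogram_law[of "x + y" x'] by (simp add: algebra_simps)
  moreover have "(norm (x + x' - y))\<^sup>2 + (norm (x - x' - y))\<^sup>2 = 2 * (norm (x - y))\<^sup>2 + 2 * (norm x')\<^sup>2"
    using parallelogram_law[of "x - y" x'] by (simp add: algebra_simps)
  ultimately show ?thesis unfolding rinner_def by (simp add: field_simps)
qed

lemma rinner_add_left: "rinner (u + v) y = rinner u y + rinner v (y::'a)"
proof -
  let ?x = "(1/2) *\<^sub>R (u + v)" and ?x' = "(1/2) *\<^sub>R (u - v)"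
  have "?x + ?x' = u" "?x - ?x' = v" "?x + ?x = u + v"
    by (simp_all add: algebra_simps flip: scaleR_2)
  moreover have "rinner (u + v) y = 2 * rinner ?x y"
    using rinner_add_diff_left[of ?x ?x y] \<open>?x + ?x = u + v\<close> by simp
  ultimately show ?thesis using rinner_add_diff_left[of ?x ?x' y] by simp
qed

lemma rinner_scaleR_left: "rinner (r *\<^sub>R x) y = r * rinner x (y::'a)"
proof -
  define h where "h r = rinner (r *\<^sub>R x) y - r * rinner x y" for r
  have "h r = 0"
  proof (rule additive_bounded_imp_zero[where h=h and C="2 * norm x * norm y"])
    show "h (a + b) = h a + h b" for a b
      by (simp add: h_def scaleR_add_left rinner_add_left algebra_simps)
    show "h 1 = 0" by (simp add: h_def)
    fix s
    have "\<bar>rinner (s *\<^sub>R x) y\<bar> \<le> \<bar>s\<bar> * norm x * norm y"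
      using abs_rinner_le[of "s *\<^sub>R x" y] by simp
    moreover have "\<bar>s * rinner x y\<bar> \<le> \<bar>s\<bar> * norm x * norm y"
      using abs_rinner_le[of x y] by (simp add: abs_mult mult.assoc mult_left_mono)
    ultimately show "\<bar>h s\<bar> \<le> 2 * norm x * norm y * \<bar>s\<bar>"
      unfolding h_def by (simp add: abs_le_iff algebra_simps)
  qed
  then show ?thesis by (simp add: h_def)
qed

lemma rinner_add_right: "rinner y (u + v) = rinner y u + rinner y (v::'a)"
  using rinner_add_left[of u v y] by (simp add: rinner_commute)

lemma rinner_scaleR_right: "rinner y (r *\<^sub>R x) = r * rinner y (x::'a)"
  using rinner_scaleR_left[of r x y] by (simp add: rinner_commute)

lemma bounded_bilinear_rinner: "bounded_bilinear (rinner :: 'a \<Rightarrow> 'a \<Rightarrow> real)"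
proof
  show "rinner (a + a') b = rinner a b + rinner a' b" for a a' b :: 'a by (rule rinner_add_left)
  show "rinner a (b + b') = rinner a b + rinner a b'" for a b b' :: 'a by (rule rinner_add_right)
  show "rinner (r *\<^sub>R a) b = r *\<^sub>R rinner a b" for r and a b :: 'a by (simp add: rinner_scaleR_left)
  show "rinner a (r *\<^sub>R b) = r *\<^sub>R rinner a b" for r and a b :: 'a by (simp add: rinner_scaleR_right)
  show "\<exists>K. \<forall>a b::'a. norm (rinner a b) \<le> norm a * norm b * K"
    by (rule exI[of _ 1]) (simp add: abs_rinner_le)
qed

lemmas rinner_bilinear_simps =
  bounded_bilinear.add_left[OF bounded_bilinear_rinner]
  bounded_bilinear.add_right[OF bounded_bilinear_rinner]
  bounded_bilinear.diff_left[OF bounded_bilinear_rinner]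
  bounded_bilinear.diff_right[OF bounded_bilinear_rinner]
  bounded_bilinear.minus_left[OF bounded_bilinear_rinner]
  bounded_bilinear.minus_right[OF bounded_bilinear_rinner]
  rinner_scaleR_left rinner_scaleR_right

lemma rinner_ii_ii: "rinner (\<i> *\<^sub>C x) (\<i> *\<^sub>C y) = rinner x (y::'a)"
  by (simp add: rinner_def norm_scaleC flip: scaleC_add_right scaleC_diff_right)

lemma rinner_ii_right: "rinner x (\<i> *\<^sub>C y) = - rinner (\<i> *\<^sub>C x) (y::'a)"
proof -
  have "rinner (\<i> *\<^sub>C x) y = rinner (\<i> *\<^sub>C (\<i> *\<^sub>C x)) (\<i> *\<^sub>C y)" by (simp only: rinner_ii_ii)
  also have "\<dots> = - rinner x (\<i> *\<^sub>C y)"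
    by (simp only: scaleC_ii_ii bounded_bilinear.minus_left[OF bounded_bilinear_rinner])
  finally show ?thesis by simp
qed

lemma power2_norm_diff: "(norm (u - v))\<^sup>2 = (norm u)\<^sup>2 - 2 * rinner u v + (norm (v::'a))\<^sup>2"
proof -
  have "(norm (u - v))\<^sup>2 = rinner u u - 2 * rinner u v + rinner v v"
    by (simp add: rinner_bilinear_simps rinner_commute[of v u] flip: rinner_self[of "u - v"])
  then show ?thesis by (simp add: rinner_self)
qed

lemma tendsto_cinner_right:
  assumes "(f \<longlongrightarrow> (y::'a)) F"
  shows "((\<lambda>n. cinner a (f n)) \<longlongrightarrow> cinner a y) F"
proof -
  have bl: "bounded_linear (rinner a)"
    by (rule bounded_bilinear.bounded_linear_right[OF bounded_bilinear_rinner])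
  have "((\<lambda>n. \<i> *\<^sub>C f n) \<longlongrightarrow> \<i> *\<^sub>C y) F"
    by (rule bounded_linear.tendsto[OF bounded_linear_scaleC assms])
  then show ?thesis
    unfolding cinner_rinner
    by (intro tendsto_Complex tendsto_minus bounded_linear.tendsto[OF bl] assms)
qed

lemma orthogonal_dense_imp_zero:
  assumes "closure D = UNIV" and orth: "\<And>z. z \<in> D \<Longrightarrow> rinner z u = 0"
  shows "u = (0::'a)"
proof -
  obtain s where s: "\<And>n. s n \<in> D" "s \<longlonglongrightarrow> u"
    using assms(1) closure_sequential by blast
  have "(\<lambda>n. rinner (s n) u) \<longlonglongrightarrow> rinner u u"
    by (rule bounded_linear.tendsto[OF bounded_bilinear.bounded_linear_left[OF bounded_bilinear_rinner] s(2)])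
  moreover have "(\<lambda>n. rinner (s n) u) = (\<lambda>n. 0)" using orth s(1) by auto
  ultimately have "rinner u u = 0" using LIMSEQ_unique[OF tendsto_const] by metis
  then show ?thesis by (simp add: rinner_self)
qed

end

section \<open>The binomial series of \<open>\<surd>(1 - x)\<close>\<close>

definition sqrt_coeff :: "nat \<Rightarrow> real" where
  "sqrt_coeff n = ((1/2) gchoose n) * (-1) ^ n"

lemma sqrt_coeff_0 [simp]: "sqrt_coeff 0 = 1"
  by (simp add: sqrt_coeff_def)

lemma sqrt_coeff_nonpos: "n \<ge> 1 \<Longrightarrow> sqrt_coeff n \<le> 0"
proof -
  assume "n \<ge> 1"
  then obtain m where n: "n = Suc m" by (cases n) auto
  have "sqrt_coeff n = pochhammer (-1/2) n / fact n"
    unfolding sqrt_coeff_def gbinomial_pochhammer by (simp add: power_mult_distrib[symmetric])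
  also have "pochhammer (-1/2::real) n = (-1/2) * pochhammer (1/2) m"
    unfolding n pochhammer_rec by simp
  finally show ?thesis by (simp add: divide_nonpos_pos pochhammer_nonneg)
qed

lemma sum_sqrt_coeff_nonneg: "(\<Sum>k<n. sqrt_coeff k) \<ge> 0"
proof (cases n)
  case (Suc m)
  have "(\<Sum>k\<le>m. sqrt_coeff k) = (- 1) ^ m * ((1/2::real) - 1 gchoose m)"
    unfolding sqrt_coeff_def by (rule gbinomial_sum_lower_neg)
  also have "\<dots> = pochhammer (1/2) m / fact m"
    by (simp add: gbinomial_pochhammer power_mult_distrib[symmetric])
  finally show ?thesis by (simp add: Suc lessThan_Suc_atMost pochhammer_nonneg)
qed simp

text \<open>All coefficients but the first are \<open>\<le> 0\<close>, so the absolute partial sums are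
  \<open>2 - \<Sum>k<n. sqrt_coeff k \<le> 2\<close>.\<close>

lemma sum_abs_sqrt_coeff_le: "(\<Sum>k<n. \<bar>sqrt_coeff k\<bar>) \<le> 2"
proof -
  have "(\<Sum>k<n. \<bar>sqrt_coeff k\<bar>) = (if n = 0 then 0 else 2) - (\<Sum>k<n. sqrt_coeff k)"
  proof (induction n)
    case (Suc n)
    then show ?case using sqrt_coeff_nonpos[of n] by (cases "n = 0") auto
  qed simp
  then show ?thesis using sum_sqrt_coeff_nonneg[of n] by simp
qed

lemma summable_abs_sqrt_coeff: "summable (\<lambda>n. \<bar>sqrt_coeff n\<bar>)"
  using sum_abs_sqrt_coeff_le[of "Suc _"]
  by (intro bounded_imp_summable[where B=2]) (simp_all add: lessThan_Suc_atMost)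

lemma summable_sqrt_coeff: "summable sqrt_coeff"
  using summable_abs_sqrt_coeff by (rule summable_rabs_cancel)

lemma suminf_sqrt_coeff_nonneg: "suminf sqrt_coeff \<ge> 0"
  by (rule LIMSEQ_le_const[OF summable_LIMSEQ[OF summable_sqrt_coeff]])
    (auto simp: sum_sqrt_coeff_nonneg)

text \<open>The Cauchy square of the series is \<open>1 - x\<close>, by Vandermonde's identity.\<close>

lemma sqrt_coeff_convolution:
  "(\<Sum>i\<le>k. sqrt_coeff i * sqrt_coeff (k - i)) = (if k = 0 then 1 else if k = 1 then -1 else 0)"
proof -
  have "(\<Sum>i\<le>k. sqrt_coeff i * sqrt_coeff (k - i))
      = (\<Sum>i=0..k. ((1/2::real) gchoose i) * ((1/2) gchoose (k - i))) * (-1)^k"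
    unfolding sqrt_coeff_def sum_distrib_right atMost_atLeast0
    by (rule sum.cong) (auto simp: power_add[symmetric])
  also have "\<dots> = of_nat (1 choose k) * (-1)^k"
    by (simp add: gbinomial_Vandermonde binomial_gbinomial)
  finally show ?thesis by (cases k) (auto simp: binomial_eq_0)
qed

lemma sqrt_coeff_triangle_sum:
  fixes f :: "nat \<Rightarrow> 'a::real_vector"
  assumes "N \<ge> 2"
  shows "(\<Sum>(i, j)\<in>{(i, j). i + j < N}. (sqrt_coeff i * sqrt_coeff j) *\<^sub>R f (i + j)) = f 0 - f 1"
proof -
  have "(\<Sum>(i, j)\<in>{(i, j). i + j < N}. (sqrt_coeff i * sqrt_coeff j) *\<^sub>R f (i + j))
      = (\<Sum>k<N. (\<Sum>i\<le>k. sqrt_coeff i * sqrt_coeff (k - i)) *\<^sub>R f k)"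
    by (subst sum.triangle_reindex) (simp add: scaleR_sum_left)
  also have "\<dots> = (\<Sum>k\<in>{0, 1}. (if k = 0 then 1 else -1) *\<^sub>R f k)"
    using assms by (intro sum.mono_neutral_cong_right) (auto simp: sqrt_coeff_convolution)
  finally show ?thesis by simp
qed

text \<open>Both the sum over the square \<open>{..<N}\<^sup>2\<close> and the sum over the triangle \<open>i + j < N\<close>
  tend to \<open>(\<Sum>n. \<bar>sqrt_coeff n\<bar>)\<^sup>2\<close>.\<close>

lemma sqrt_coeff_square_minus_triangle:
  "(\<lambda>N. \<Sum>(i, j)\<in>{..<N} \<times> {..<N} - {(i, j). i + j < N}. \<bar>sqrt_coeff i\<bar> * \<bar>sqrt_coeff j\<bar>)
     \<longlonglongrightarrow> 0"
proof -
  let ?g = "\<lambda>(i, j). \<bar>sqrt_coeff i\<bar> * \<bar>sqrt_coeff j\<bar>" and ?s = "\<Sum>n. \<bar>sqrt_coeff n\<bar>"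
  have sub: "{(i, j). i + j < N} \<subseteq> {..<N} \<times> {..<N::nat}" for N by auto
  have square: "(\<lambda>N. sum ?g ({..<N} \<times> {..<N})) \<longlonglongrightarrow> ?s * ?s"
    using tendsto_mult[OF summable_LIMSEQ summable_LIMSEQ, OF summable_abs_sqrt_coeff summable_abs_sqrt_coeff]
    by (simp add: sum_product sum.cartesian_product)
  have "(\<lambda>k. \<Sum>i\<le>k. \<bar>sqrt_coeff i\<bar> * \<bar>sqrt_coeff (k - i)\<bar>) sums (?s * ?s)"
    using Cauchy_product_sums[of "\<lambda>n. \<bar>sqrt_coeff n\<bar>" "\<lambda>n. \<bar>sqrt_coeff n\<bar>"] summable_abs_sqrt_coeff
    by simp
  then have triangle: "(\<lambda>N. sum ?g {(i, j). i + j < N}) \<longlonglongrightarrow> ?s * ?s"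
    unfolding sums_def by (simp add: sum.triangle_reindex)
  show ?thesis
    using tendsto_diff[OF square triangle]
    by (simp add: sum_diff[OF finite_cartesian_product[OF finite_lessThan finite_lessThan] sub])
qed

definition sqrt_id_minus :: "('a::banach \<Rightarrow> 'a) \<Rightarrow> 'a \<Rightarrow> 'a" where
  "sqrt_id_minus B x = (\<Sum>n. sqrt_coeff n *\<^sub>R (B ^^ n) x)"

lemma bounded_linear_funpow:
  assumes "bounded_linear (B :: 'a::real_normed_vector \<Rightarrow> 'a)"
  shows "bounded_linear (B ^^ n)"
proof (induction n)
  case 0
  show ?case using bounded_linear_ident by (simp add: id_def)
next
  case (Suc n)
  show ?case using bounded_linear_compose[OF assms Suc] by (simp add: o_def)
qed

lemma tendsto_iterate_bounded_linear:
  fixes P :: "nat \<Rightarrow> 'a::real_normed_vector \<Rightarrow> 'a"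
  assumes lin: "\<And>N. linear (P N)" and bound: "\<And>N y. norm (P N y) \<le> K * norm y"
    and lim: "\<And>y. (\<lambda>N. P N y) \<longlonglongrightarrow> S y"
  shows "(\<lambda>N. P N (P N x)) \<longlonglongrightarrow> S (S x)"
proof -
  have "(\<lambda>N. P N (P N x) - P N (S x)) \<longlonglongrightarrow> 0"
  proof (rule Lim_null_comparison)
    show "\<forall>\<^sub>F N in sequentially. norm (P N (P N x) - P N (S x)) \<le> K * norm (P N x - S x)"
      by (simp add: bound flip: linear_diff[OF lin])
    show "(\<lambda>N. K * norm (P N x - S x)) \<longlonglongrightarrow> 0"
      using tendsto_mult_right_zero[OF tendsto_norm_zero[OF LIM_zero[OF lim]]] .
  qed
  from tendsto_add[OF this lim[of "S x"]] show ?thesis by simp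
qed

context
  fixes B :: "'a::banach \<Rightarrow> 'a"
  assumes bounded_linear_B: "bounded_linear B" and contraction: "\<And>x. norm (B x) \<le> norm x"
begin

lemma linear_funpow: "linear (B ^^ n)"
  by (rule bounded_linear.linear[OF bounded_linear_funpow[OF bounded_linear_B]])

lemma norm_funpow_le: "norm ((B ^^ n) x) \<le> norm x"
  by (induction n) (auto intro: order_trans[OF contraction])

lemma norm_sqrt_coeff_funpow_le: "norm (sqrt_coeff n *\<^sub>R (B ^^ n) x) \<le> \<bar>sqrt_coeff n\<bar> * norm x"
  by (simp add: mult_left_mono norm_funpow_le)

lemma summable_norm_sqrt_id_minus: "summable (\<lambda>n. norm (sqrt_coeff n *\<^sub>R (B ^^ n) x))"
  by (rule summable_comparison_test'[OF summable_mult2[OF summable_abs_sqrt_coeff, of "norm x"], where N=0])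
    (simp add: mult_left_mono norm_funpow_le)

lemma sums_sqrt_id_minus: "(\<lambda>n. sqrt_coeff n *\<^sub>R (B ^^ n) x) sums sqrt_id_minus B x"
  unfolding sqrt_id_minus_def
  by (rule summable_sums[OF summable_norm_cancel[OF summable_norm_sqrt_id_minus]])

lemma norm_sum_sqrt_coeff_funpow_le: "norm (\<Sum>n<N. sqrt_coeff n *\<^sub>R (B ^^ n) x) \<le> 2 * norm x"
proof -
  have "norm (\<Sum>n<N. sqrt_coeff n *\<^sub>R (B ^^ n) x) \<le> (\<Sum>n<N. \<bar>sqrt_coeff n\<bar> * norm x)"
    by (rule order_trans[OF norm_sum sum_mono[OF norm_sqrt_coeff_funpow_le]])
  also have "\<dots> = (\<Sum>n<N. \<bar>sqrt_coeff n\<bar>) * norm x" by (simp add: sum_distrib_right)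
  also have "\<dots> \<le> 2 * norm x" by (rule mult_right_mono[OF sum_abs_sqrt_coeff_le]) simp
  finally show ?thesis .
qed

lemma norm_sqrt_id_minus_le: "norm (sqrt_id_minus B x) \<le> 2 * norm x"
  using sums_sqrt_id_minus[unfolded sums_def]
  by (rule LIMSEQ_le_const2[OF tendsto_norm]) (simp add: norm_sum_sqrt_coeff_funpow_le)

lemma bounded_linear_sqrt_id_minus: "bounded_linear (sqrt_id_minus B)"
proof (rule bounded_linear_intro[where K=2])
  show "sqrt_id_minus B (x + y) = sqrt_id_minus B x + sqrt_id_minus B y" for x y
    by (rule sums_unique2[OF sums_sqrt_id_minus])
      (simp add: linear_add[OF linear_funpow] scaleR_add_right sums_add sums_sqrt_id_minus)
  show "sqrt_id_minus B (r *\<^sub>R x) = r *\<^sub>R sqrt_id_minus B x" for r x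
  proof (rule sums_unique2[OF sums_sqrt_id_minus])
    show "(\<lambda>n. sqrt_coeff n *\<^sub>R (B ^^ n) (r *\<^sub>R x)) sums (r *\<^sub>R sqrt_id_minus B x)"
      using sums_scaleR_right[OF sums_sqrt_id_minus[of x], of r]
      by (simp add: linear_scale[OF linear_funpow] mult.commute)
  qed
qed (use norm_sqrt_id_minus_le in \<open>simp add: mult.commute\<close>)

lemma sqrt_id_minus_commute:
  assumes C: "bounded_linear C" and CB: "\<And>x. C (B x) = B (C x)"
  shows "C (sqrt_id_minus B x) = sqrt_id_minus B (C x)"
proof -
  have "C ((B ^^ n) x) = (B ^^ n) (C x)" for n x by (induction n) (simp_all add: CB)
  then show ?thesis
    using bounded_linear.sums[OF C sums_sqrt_id_minus[of x]] sums_sqrt_id_minus[of "C x"]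
    by (simp add: linear_scale[OF bounded_linear.linear[OF C]] sums_unique2)
qed

lemma sqrt_id_minus_squared: "sqrt_id_minus B (sqrt_id_minus B x) = x - B x"
proof -
  define P where "P N y = (\<Sum>n<N. sqrt_coeff n *\<^sub>R (B ^^ n) y)" for N y
  define f where "f = (\<lambda>(i, j). (sqrt_coeff i * sqrt_coeff j) *\<^sub>R (B ^^ (i + j)) x)"
  let ?square = "\<lambda>N. {..<N} \<times> {..<N}" and ?triangle = "\<lambda>N. {(i::nat, j). i + j < N}"
  have sub: "?triangle N \<subseteq> ?square N" for N by auto
  have linear_P: "linear (P N)" for N
    unfolding P_def
    by (rule linearI) (simp_all add: linear_add[OF linear_funpow] linear_scale[OF linear_funpow]
        scaleR_add_right sum.distrib scaleR_sum_right mult.commute)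
  have lim: "(\<lambda>N. P N (P N x)) \<longlonglongrightarrow> sqrt_id_minus B (sqrt_id_minus B x)"
    using linear_P norm_sum_sqrt_coeff_funpow_le sums_sqrt_id_minus[unfolded sums_def]
    unfolding P_def by (rule tendsto_iterate_bounded_linear)
  have expand: "P N (P N x) = sum f (?square N)" for N
    unfolding P_def f_def
    by (simp add: linear_sum[OF linear_funpow] linear_scale[OF linear_funpow] scaleR_sum_right
        funpow_add sum.cartesian_product)
  have square_minus_triangle: "(\<lambda>N. sum f (?square N) - sum f (?triangle N)) \<longlonglongrightarrow> 0"
  proof (rule Lim_null_comparison)
    let ?tail = "\<lambda>N. \<Sum>(i, j)\<in>?square N - ?triangle N. \<bar>sqrt_coeff i\<bar> * \<bar>sqrt_coeff j\<bar>"
    have f_le: "norm (f p) \<le> (case p of (i, j) \<Rightarrow> \<bar>sqrt_coeff i\<bar> * \<bar>sqrt_coeff j\<bar> * norm x)" for p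
    proof (cases p)
      case (Pair i j)
      have "norm ((B ^^ (i + j)) x) \<le> norm x" by (rule norm_funpow_le)
      then show ?thesis unfolding Pair f_def by (simp add: abs_mult mult_left_mono)
    qed
    have "norm (sum f (?square N) - sum f (?triangle N)) \<le> ?tail N * norm x" for N
    proof -
      have "sum f (?square N) - sum f (?triangle N) = sum f (?square N - ?triangle N)"
        by (simp add: sum_diff[OF _ sub])
      also have "norm \<dots> \<le> (\<Sum>(i, j)\<in>?square N - ?triangle N. \<bar>sqrt_coeff i\<bar> * \<bar>sqrt_coeff j\<bar> * norm x)"
        by (rule order_trans[OF norm_sum sum_mono[OF f_le]])
      finally show ?thesis by (simp add: sum_distrib_right case_prod_unfold)
    qed
    then show "\<forall>\<^sub>F N in sequentially. norm (sum f (?square N) - sum f (?triangle N)) \<le> ?tail N * norm x"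
      by simp
    show "(\<lambda>N. ?tail N * norm x) \<longlonglongrightarrow> 0"
      by (rule tendsto_mult_left_zero[OF sqrt_coeff_square_minus_triangle])
  qed
  have "(\<lambda>N. sum f (?triangle N)) \<longlonglongrightarrow> x - B x"
  proof (rule tendsto_eventually)
    show "\<forall>\<^sub>F N in sequentially. sum f (?triangle N) = x - B x"
      unfolding eventually_sequentially f_def
      using sqrt_coeff_triangle_sum[of _ "\<lambda>k. (B ^^ k) x"] by auto
  qed
  from tendsto_add[OF square_minus_triangle this] have "(\<lambda>N. P N (P N x)) \<longlonglongrightarrow> x - B x"
    by (simp add: expand)
  with lim show ?thesis by (rule LIMSEQ_unique)
qed

end

section \<open>Square roots of positive operators\<close>

definition symmetric_op :: "('a::real_normed_vector \<Rightarrow> 'a) \<Rightarrow> bool" where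
  "symmetric_op A \<longleftrightarrow> (\<forall>x y. rinner x (A y) = rinner (A x) y)"

definition positive_op :: "('a::real_normed_vector \<Rightarrow> 'a) \<Rightarrow> bool" where
  "positive_op A \<longleftrightarrow> (\<forall>x. rinner x (A x) \<ge> 0)"

lemma symmetric_op_funpow: "symmetric_op B \<Longrightarrow> symmetric_op (B ^^ n)"
  unfolding symmetric_op_def
proof (induction n)
  case (Suc n)
  then show ?case by (metis funpow_simps_right(2) funpow.simps(2) o_apply)
qed simp

context
  assumes hilb: "hilbert_norm TYPE('a::{complex_normed_vector,banach})"
begin

lemma positive_op_Cauchy_Schwarz:
  fixes A :: "'a \<Rightarrow> 'a"
  assumes "bounded_linear A" and sym: "symmetric_op A" and pos: "positive_op A"
  shows "(rinner x (A y))\<^sup>2 \<le> rinner x (A x) * rinner y (A y)"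
proof (rule quadratic_nonneg_discriminant)
  show "0 \<le> rinner y (A y)" using pos unfolding positive_op_def by blast
  fix t
  have "A (x + t *\<^sub>R y) = A x + t *\<^sub>R A y"
    using assms(1) by (simp add: linear_add linear_scale bounded_linear.linear)
  moreover have "rinner y (A x) = rinner x (A y)"
    using sym unfolding symmetric_op_def by (metis rinner_commute)
  moreover have "0 \<le> rinner (x + t *\<^sub>R y) (A (x + t *\<^sub>R y))"
    using pos unfolding positive_op_def by blast
  ultimately show "0 \<le> rinner x (A x) + 2 * rinner x (A y) * t + rinner y (A y) * t\<^sup>2"
    by (simp add: rinner_bilinear_simps[OF hilb] algebra_simps power2_eq_square)
qed

lemma positive_op_form_eq_zero:
  fixes A :: "'a \<Rightarrow> 'a"
  assumes "bounded_linear A" "symmetric_op A" "positive_op A" and "rinner y (A y) = 0"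
  shows "A y = 0"
proof -
  have "(rinner (A y) (A y))\<^sup>2 \<le> rinner (A y) (A (A y)) * rinner y (A y)"
    by (rule positive_op_Cauchy_Schwarz[OF assms(1-3)])
  then have "(norm (A y)) ^ 4 \<le> 0" using assms(4) by (simp add: rinner_self)
  then show ?thesis by simp
qed

lemma positive_op_norm_sq_le:
  fixes A :: "'a \<Rightarrow> 'a"
  assumes bl: "bounded_linear A" and sym: "symmetric_op A" and pos: "positive_op A"
    and L: "\<And>v. norm (A v) \<le> L * norm v"
  shows "(norm (A x))\<^sup>2 \<le> L * rinner x (A x)"
proof (cases "A x = 0")
  case True
  then show ?thesis using pos L[of x] unfolding positive_op_def by auto
next
  case False
  have "((norm (A x))\<^sup>2)\<^sup>2 = (rinner x (A (A x)))\<^sup>2"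
    using sym unfolding symmetric_op_def by (simp add: rinner_self)
  also have "\<dots> \<le> rinner x (A x) * rinner (A x) (A (A x))"
    by (rule positive_op_Cauchy_Schwarz[OF bl sym pos])
  also have "rinner (A x) (A (A x)) \<le> L * (norm (A x))\<^sup>2"
    using abs_rinner_le[of "A x" "A (A x)"] mult_left_mono[OF L[of "A x"], of "norm (A x)"]
    by (simp add: power2_eq_square mult_ac)
  then have "rinner x (A x) * rinner (A x) (A (A x)) \<le> rinner x (A x) * (L * (norm (A x))\<^sup>2)"
    using pos unfolding positive_op_def by (simp add: mult_left_mono)
  finally have "(norm (A x))\<^sup>2 * (norm (A x))\<^sup>2 \<le> (L * rinner x (A x)) * (norm (A x))\<^sup>2"
    by (simp add: power2_eq_square mult_ac)
  then show ?thesis by (rule mult_right_le_imp_le) (use False in simp)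
qed

lemma positive_op_id_minus_contraction:
  fixes A :: "'a \<Rightarrow> 'a"
  assumes bl: "bounded_linear A" and sym: "symmetric_op A" and pos: "positive_op A"
    and L: "\<And>v. norm (A v) \<le> L * norm v" and "L > 0"
  shows "norm (x - (1/L) *\<^sub>R A x) \<le> norm x"
proof -
  let ?r = "rinner x (A x)"
  have "(norm (x - (1/L) *\<^sub>R A x))\<^sup>2 = (norm x)\<^sup>2 - 2 * (?r / L) + (norm (A x))\<^sup>2 / L\<^sup>2"
    by (simp add: power2_norm_diff[OF hilb] rinner_scaleR_right[OF hilb] power_divide)
  also have "\<dots> \<le> (norm x)\<^sup>2 - 2 * (?r / L) + L * ?r / L\<^sup>2"
    using positive_op_norm_sq_le[OF bl sym pos L, of x] \<open>L > 0\<close> by (simp add: divide_right_mono)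
  also have "\<dots> \<le> (norm x)\<^sup>2"
    using pos \<open>L > 0\<close> unfolding positive_op_def by (simp add: power2_eq_square)
  finally show ?thesis by (rule power2_le_imp_le) simp
qed

context
  fixes B :: "'a \<Rightarrow> 'a"
  assumes bounded_linear_B: "bounded_linear B" and contraction: "\<And>x. norm (B x) \<le> norm x"
begin

lemma sums_rinner_sqrt_id_minus:
  "(\<lambda>n. sqrt_coeff n * rinner x ((B ^^ n) y)) sums rinner x (sqrt_id_minus B y)"
  using bounded_linear.sums[OF bounded_bilinear.bounded_linear_right[OF bounded_bilinear_rinner[OF hilb]]
      sums_sqrt_id_minus[OF bounded_linear_B contraction]]
  by (simp add: rinner_scaleR_right[OF hilb])

lemma symmetric_sqrt_id_minus: "symmetric_op B \<Longrightarrow> symmetric_op (sqrt_id_minus B)"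
  unfolding symmetric_op_def
proof (intro allI)
  fix x y
  assume "\<forall>x y. rinner x (B y) = rinner (B x) y"
  then have "rinner x ((B ^^ n) y) = rinner y ((B ^^ n) x)" for n
    using symmetric_op_funpow[of B n] by (simp add: symmetric_op_def rinner_commute[of _ y])
  then show "rinner x (sqrt_id_minus B y) = rinner (sqrt_id_minus B x) y"
    using sums_rinner_sqrt_id_minus[of x y] sums_rinner_sqrt_id_minus[of y x]
    by (simp add: sums_unique2 rinner_commute[of _ y])
qed

text \<open>Since \<open>sqrt_coeff n \<le> 0\<close> for \<open>n \<ge> 1\<close> and \<open>\<langle>x, B\<^sup>n x\<rangle> \<le> \<parallel>x\<parallel>\<^sup>2\<close>, the form of
  \<open>\<surd>(I - B)\<close> dominates \<open>(\<Sum>n. sqrt_coeff n) \<parallel>x\<parallel>\<^sup>2 \<ge> 0\<close>.\<close>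

lemma positive_sqrt_id_minus: "positive_op (sqrt_id_minus B)"
  unfolding positive_op_def
proof
  fix x
  have termwise: "sqrt_coeff n * (norm x)\<^sup>2 \<le> sqrt_coeff n * rinner x ((B ^^ n) x)" for n
  proof (cases "n = 0")
    case False
    have "rinner x ((B ^^ n) x) \<le> norm x * norm x"
      using abs_rinner_le[of x "(B ^^ n) x"]
        mult_left_mono[OF norm_funpow_le[OF bounded_linear_B contraction], of "norm x" n x]
      by simp
    with False show ?thesis
      by (intro mult_left_mono_neg sqrt_coeff_nonpos) (simp_all add: power2_eq_square)
  qed (simp add: rinner_self)
  have "0 \<le> suminf sqrt_coeff * (norm x)\<^sup>2" by (simp add: suminf_sqrt_coeff_nonneg)
  also have "\<dots> \<le> rinner x (sqrt_id_minus B x)"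
    by (rule sums_le[OF termwise sums_mult2[OF summable_sums[OF summable_sqrt_coeff]]
          sums_rinner_sqrt_id_minus])
  finally show "0 \<le> rinner x (sqrt_id_minus B x)" .
qed

end

lemma positive_op_sqrt_exists:
  fixes A :: "'a \<Rightarrow> 'a"
  assumes bl: "bounded_linear A" and sym: "symmetric_op A" and pos: "positive_op A"
  obtains S where "bounded_linear S" "symmetric_op S" "positive_op S" "\<And>x. S (S x) = A x"
    "\<And>C x. bounded_linear C \<Longrightarrow> (\<And>y. C (A y) = A (C y)) \<Longrightarrow> C (S x) = S (C x)"
proof -
  obtain L where "L > 0" and L: "\<And>v. norm (A v) \<le> L * norm v"
    using bounded_linear.pos_bounded[OF bl] by (auto simp: mult.commute)
  define B where "B x = x - (1/L) *\<^sub>R A x" for x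
  have blB: "bounded_linear B" unfolding B_def
    by (intro bounded_linear_sub bounded_linear_ident bounded_linear_compose[OF bounded_linear_scaleR_right bl])
  have contraction: "norm (B x) \<le> norm x" for x
    unfolding B_def by (rule positive_op_id_minus_contraction[OF bl sym pos L \<open>L > 0\<close>])
  have symB: "symmetric_op B"
    using sym unfolding symmetric_op_def B_def by (simp add: rinner_bilinear_simps[OF hilb])
  define S where "S x = sqrt L *\<^sub>R sqrt_id_minus B x" for x
  show thesis
  proof
    show "bounded_linear S" unfolding S_def
      by (rule bounded_linear_compose[OF bounded_linear_scaleR_right bounded_linear_sqrt_id_minus[OF blB contraction]])
    show "symmetric_op S"
      using symmetric_sqrt_id_minus[OF blB contraction symB]
      unfolding symmetric_op_def S_def by (simp add: rinner_bilinear_simps[OF hilb])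
    show "positive_op S"
      using positive_sqrt_id_minus[OF blB contraction] \<open>L > 0\<close>
      unfolding positive_op_def S_def by (auto simp: rinner_bilinear_simps[OF hilb])
    show "S (S x) = A x" for x
      using \<open>L > 0\<close> unfolding S_def
      by (simp add: linear_scale[OF bounded_linear.linear[OF bounded_linear_sqrt_id_minus[OF blB contraction]]]
          sqrt_id_minus_squared[OF blB contraction])
        (simp add: B_def)
    show "C (S x) = S (C x)" if C: "bounded_linear C" and CA: "\<And>y. C (A y) = A (C y)" for C x
    proof -
      have "C (B y) = B (C y)" for y
        unfolding B_def using CA by (simp add: linear_diff linear_scale bounded_linear.linear[OF C])
      then show ?thesis
        unfolding S_def using sqrt_id_minus_commute[OF blB contraction C]
        by (simp add: linear_scale bounded_linear.linear[OF C])
    qed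
  qed
qed

text \<open>The square root is unique among positive operators: \<open>S'\<close> commutes with \<open>A = S'\<^sup>2\<close>,
  hence with \<open>S\<close>, so \<open>y = S' x - S x\<close> satisfies \<open>S' y + S y = 0\<close>; both forms being
  nonnegative forces \<open>S y = 0\<close>, so \<open>A y = 0\<close>.\<close>

lemma positive_op_sqrt_unique:
  fixes A S S' :: "'a \<Rightarrow> 'a"
  assumes blS: "bounded_linear S" and symS: "symmetric_op S" and posS: "positive_op S"
    and SS: "\<And>x. S (S x) = A x"
    and commute: "\<And>C x. bounded_linear C \<Longrightarrow> (\<And>y. C (A y) = A (C y)) \<Longrightarrow> C (S x) = S (C x)"
    and inj: "\<And>y. A y = 0 \<Longrightarrow> y = 0"
    and blS': "bounded_linear S'" and posS': "positive_op S'" and S'S': "\<And>x. S' (S' x) = A x"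
  shows "S' = S"
proof
  fix x
  have S'S: "S' (S v) = S (S' v)" for v
    by (rule commute[OF blS']) (simp flip: S'S')
  let ?y = "S' x - S x"
  have "S' ?y + S ?y = 0"
    using linear_diff[OF bounded_linear.linear[OF blS']] linear_diff[OF bounded_linear.linear[OF blS]]
    by (simp add: S'S' SS S'S)
  then have "rinner ?y (S' ?y) + rinner ?y (S ?y) = 0"
    by (metis rinner_add_right[OF hilb] rinner_zero_right)
  then have "rinner ?y (S ?y) = 0"
    using posS posS' unfolding positive_op_def by (smt (verit))
  then have "S ?y = 0" by (rule positive_op_form_eq_zero[OF blS symS posS])
  then have "A ?y = 0" using SS[of ?y] linear_0[OF bounded_linear.linear[OF blS]] by simp
  then have "?y = 0" by (rule inj)
  then show "S' x = S x" by simp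
qed

lemma cinner_real_if_commutes_ii:
  fixes S :: "'a \<Rightarrow> 'a"
  assumes "symmetric_op S" and ii: "\<And>x. \<i> *\<^sub>C S x = S (\<i> *\<^sub>C x)"
  shows "cinner x (S x) \<in> \<real>"
proof -
  have "rinner x (S (\<i> *\<^sub>C x)) = rinner (S x) (\<i> *\<^sub>C x)"
    using assms(1) unfolding symmetric_op_def by blast
  also have "\<dots> = - rinner x (S (\<i> *\<^sub>C x))"
    by (simp add: rinner_ii_right[OF hilb] ii rinner_commute)
  finally show ?thesis by (simp add: complex_is_Real_iff cinner_rinner ii)
qed

end

section \<open>Nearest points\<close>

lemma Cauchy_dominated:
  fixes f :: "nat \<Rightarrow> 'a::real_normed_vector" and g :: "nat \<Rightarrow> 'b::real_normed_vector"
  assumes "Cauchy f" and dom: "\<And>m n. norm (g m - g n) \<le> K * norm (f m - f n)"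
  shows "Cauchy g"
proof (rule CauchyI)
  fix e :: real
  assume "e > 0"
  then obtain M where M: "\<forall>m\<ge>M. \<forall>n\<ge>M. norm (f m - f n) < e / (\<bar>K\<bar> + 1)"
    using CauchyD[OF assms(1), of "e / (\<bar>K\<bar> + 1)"] by auto
  have "norm (g m - g n) < e" if "M \<le> m" "M \<le> n" for m n
  proof -
    have "K * norm (f m - f n) \<le> (\<bar>K\<bar> + 1) * norm (f m - f n)"
      by (rule mult_right_mono) auto
    with dom[of m n] have "norm (g m - g n) \<le> (\<bar>K\<bar> + 1) * norm (f m - f n)"
      by (rule order_trans)
    also have "\<dots> < e" using M that by (simp add: field_simps)
    finally show ?thesis .
  qed
  then show "\<exists>M. \<forall>m\<ge>M. \<forall>n\<ge>M. norm (g m - g n) < e" by blast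
qed

lemma Cauchy_if_norm_diff_sq_le:
  fixes v :: "nat \<Rightarrow> 'a::real_normed_vector"
  assumes "c \<ge> 0" and bound: "\<And>m n. (norm (v m - v n))\<^sup>2 \<le> c / Suc m + c / Suc n"
  shows "Cauchy v"
proof (rule CauchyI)
  fix e :: real
  assume "e > 0"
  obtain N :: nat where "2 * c / e\<^sup>2 < real N"
    using reals_Archimedean2 by blast
  then have N: "2 * c / e\<^sup>2 < real (Suc N)" by simp
  have "norm (v m - v n) < e" if "N \<le> m" "N \<le> n" for m n
  proof -
    have "c / Suc m + c / Suc n \<le> 2 * c / Suc N"
      using that \<open>c \<ge> 0\<close> frac_le[of c c "Suc N" "Suc m"] frac_le[of c c "Suc N" "Suc n"] by simp
    also have "\<dots> < e\<^sup>2" using N \<open>e > 0\<close> by (simp add: field_simps)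
    finally have "(norm (v m - v n))\<^sup>2 < e\<^sup>2" using bound[of m n] by linarith
    then show ?thesis using \<open>e > 0\<close> by (simp add: power_less_imp_less_base)
  qed
  then show "\<exists>M. \<forall>m\<ge>M. \<forall>n\<ge>M. norm (v m - v n) < e" by blast
qed

context
  assumes hilb: "hilbert_norm TYPE('a::{complex_normed_vector,banach})"
begin

lemma Apollonius:
  "(norm (a - b))\<^sup>2 = 2 * (norm (y - a))\<^sup>2 + 2 * (norm (y - b))\<^sup>2 - 4 * (norm (y - (1/2) *\<^sub>R (a + b)))\<^sup>2"
  for a b y :: 'a
proof -
  have "(y - a) + (y - b) = 2 *\<^sub>R (y - (1/2) *\<^sub>R (a + b))"
    by (simp add: algebra_simps flip: scaleR_2)
  then have "norm ((y - a) + (y - b)) = 2 * norm (y - (1/2) *\<^sub>R (a + b))"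
    by simp
  moreover have "norm ((y - a) - (y - b)) = norm (a - b)" by (simp add: norm_minus_commute)
  ultimately show ?thesis using parallelogram_law[OF hilb, of "y - a" "y - b"] by (simp add: power_mult_distrib)
qed

lemma nearest_point_exists:
  fixes V :: "'a set"
  assumes "closed V" and "V \<noteq> {}"
    and midpoint: "\<And>a b. a \<in> V \<Longrightarrow> b \<in> V \<Longrightarrow> (1/2) *\<^sub>R (a + b) \<in> V"
  obtains p where "p \<in> V" "\<And>v. v \<in> V \<Longrightarrow> norm (y - p) \<le> norm (y - v)"
proof -
  define d where "d = infdist y V"
  have d_le: "d \<le> norm (y - v)" if "v \<in> V" for v
    using infdist_le[OF that, of y] by (simp add: d_def dist_norm)
  have "\<exists>v\<in>V. (norm (y - v))\<^sup>2 < d\<^sup>2 + e" if "e > 0" for e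
  proof -
    have "d < sqrt (d\<^sup>2 + e)"
      by (rule real_less_rsqrt) (use that in simp)
    then have "(INF a\<in>V. dist y a) < sqrt (d\<^sup>2 + e)"
      unfolding d_def infdist_notempty[OF \<open>V \<noteq> {}\<close>] .
    then obtain v where "v \<in> V" "dist y v < sqrt (d\<^sup>2 + e)"
      using \<open>V \<noteq> {}\<close> by (subst (asm) cINF_less_iff) auto
    then have "(norm (y - v))\<^sup>2 < (sqrt (d\<^sup>2 + e))\<^sup>2"
      by (intro power_strict_mono) (simp_all add: dist_norm)
    then show ?thesis using \<open>e > 0\<close> \<open>v \<in> V\<close> by auto
  qed
  then have "\<forall>n. \<exists>v. v \<in> V \<and> (norm (y - v))\<^sup>2 < d\<^sup>2 + 1 / Suc n"
    by (metis of_nat_0_less_iff zero_less_Suc zero_less_divide_1_iff)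
  then obtain v where vV: "\<And>n. v n \<in> V" and close: "\<And>n. (norm (y - v n))\<^sup>2 < d\<^sup>2 + 1 / Suc n"
    by metis
  have "(norm (v m - v n))\<^sup>2 \<le> 2 / Suc m + 2 / Suc n" for m n
  proof -
    have "d\<^sup>2 \<le> (norm (y - (1/2) *\<^sub>R (v m + v n)))\<^sup>2"
      using d_le[OF midpoint[OF vV vV]] infdist_nonneg[of y V] by (simp add: d_def power_mono)
    then show ?thesis
      using Apollonius[of "v m" "v n" y] close[of m] close[of n] by simp
  qed
  then have "Cauchy v" by (rule Cauchy_if_norm_diff_sq_le[rotated]) simp
  then obtain p where p: "v \<longlonglongrightarrow> p" using Cauchy_convergent_iff convergent_def by blast
  have "p \<in> V" using \<open>closed V\<close> vV p closed_sequential_limits by blast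
  moreover have "(norm (y - p))\<^sup>2 \<le> d\<^sup>2"
  proof (rule LIMSEQ_le)
    show "(\<lambda>n. (norm (y - v n))\<^sup>2) \<longlonglongrightarrow> (norm (y - p))\<^sup>2" by (intro tendsto_intros p)
    show "(\<lambda>n. d\<^sup>2 + 1 / Suc n) \<longlonglongrightarrow> d\<^sup>2"
      using tendsto_add[OF tendsto_const LIMSEQ_inverse_real_of_nat, of "d\<^sup>2"]
      by (simp add: inverse_eq_divide)
  qed (use close less_imp_le in blast)
  then have "norm (y - p) \<le> d"
    using infdist_nonneg[of y V] by (simp add: d_def power2_le_iff_abs_le)
  ultimately show thesis using d_le that by (meson order_trans)
qed

lemma nearest_point_orthogonal:
  fixes V :: "'a set"
  assumes nearest: "\<And>v. v \<in> V \<Longrightarrow> norm (y - p) \<le> norm (y - v)"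
    and line: "\<And>t. p + t *\<^sub>R v \<in> V"
  shows "rinner (y - p) v = 0"
proof -
  let ?u = "y - p"
  have "(- rinner ?u v)\<^sup>2 \<le> 0 * (norm v)\<^sup>2"
  proof (rule quadratic_nonneg_discriminant)
    fix t
    have "norm ?u \<le> norm (?u - t *\<^sub>R v)"
      using nearest[OF line[of t]] by (simp add: algebra_simps)
    then have "(norm ?u)\<^sup>2 \<le> (norm (?u - t *\<^sub>R v))\<^sup>2" by (intro power_mono) auto
    also have "\<dots> = (norm ?u)\<^sup>2 - 2 * (t * rinner ?u v) + t\<^sup>2 * (norm v)\<^sup>2"
      by (simp add: power2_norm_diff[OF hilb] rinner_scaleR_right[OF hilb] power_mult_distrib)
    finally show "0 \<le> 0 + 2 * (- rinner ?u v) * t + (norm v)\<^sup>2 * t\<^sup>2"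
      by (simp add: algebra_simps)
  qed simp
  then show ?thesis by simp
qed

end

section \<open>Self-adjoint operators bounded below\<close>

context
  fixes D :: "'a::complex_normed_vector set" and T :: "'a \<Rightarrow> 'a"
  assumes lin_op: "lin_op D T"
begin

lemma lin_op_zero_mem: "0 \<in> D"
  and lin_op_add_mem: "x \<in> D \<Longrightarrow> y \<in> D \<Longrightarrow> x + y \<in> D"
  and lin_op_scaleC_mem: "x \<in> D \<Longrightarrow> c *\<^sub>C x \<in> D"
  and lin_op_add: "x \<in> D \<Longrightarrow> y \<in> D \<Longrightarrow> T (x + y) = T x + T y"
  and lin_op_scaleC: "x \<in> D \<Longrightarrow> T (c *\<^sub>C x) = c *\<^sub>C T x"
  using lin_op unfolding lin_op_def by blast+

lemma lin_op_scaleR_mem: "x \<in> D \<Longrightarrow> r *\<^sub>R x \<in> D"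
  using lin_op_scaleC_mem[of x "of_real r"] by (simp add: scaleC_of_real)

lemma lin_op_scaleR: "x \<in> D \<Longrightarrow> T (r *\<^sub>R x) = r *\<^sub>R T x"
  using lin_op_scaleC[of x "of_real r"] by (simp add: scaleC_of_real)

lemma lin_op_diff_mem: "x \<in> D \<Longrightarrow> y \<in> D \<Longrightarrow> x - y \<in> D"
  using lin_op_add_mem[of x "-y"] lin_op_scaleR_mem[of y "-1"] by simp

lemma lin_op_diff: "x \<in> D \<Longrightarrow> y \<in> D \<Longrightarrow> T (x - y) = T x - T y"
  using lin_op_add[of x "-y"] lin_op_scaleR_mem[of y "-1"] lin_op_scaleR[of y "-1"] by simp

lemma lin_op_zero: "T 0 = 0"
  using lin_op_scaleR[OF lin_op_zero_mem, of 0] by simp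

end

definition op_inverse :: "'a set \<Rightarrow> ('a \<Rightarrow> 'a) \<Rightarrow> 'a \<Rightarrow> 'a" where
  "op_inverse D T y = (THE x. x \<in> D \<and> T x = y)"

context
  fixes D :: "'a::{complex_normed_vector,banach} set" and T :: "'a \<Rightarrow> 'a"
  assumes hilb: "hilbert_norm TYPE('a)" and self_adjoint: "self_adjoint_op D T"
    and ge_one: "op_ge D T 1"
begin

lemma lin_op_self_adjoint: "lin_op D T"
  and dense_self_adjoint: "closure D = UNIV"
  using self_adjoint unfolding self_adjoint_op_def by blast+

lemma rinner_self_adjoint: "x \<in> D \<Longrightarrow> y \<in> D \<Longrightarrow> rinner (T x) y = rinner x (T y)"
  using self_adjoint unfolding self_adjoint_op_def by (simp add: cinner_rinner complex_eq_iff)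

lemma norm_sq_le_form: "x \<in> D \<Longrightarrow> (norm x)\<^sup>2 \<le> rinner x (T x)"
  using ge_one unfolding op_ge_def by (simp add: cinner_rinner)

lemma norm_le_norm_op: "x \<in> D \<Longrightarrow> norm x \<le> norm (T x)"
proof -
  assume "x \<in> D"
  then have "(norm x)\<^sup>2 \<le> norm x * norm (T x)"
    using norm_sq_le_form[of x] abs_rinner_le[of x "T x"] by linarith
  then show ?thesis by (cases "norm x = 0") (auto simp: power2_eq_square)
qed

lemma op_inj:
  assumes "x \<in> D" "y \<in> D" "T x = T y"
  shows "x = y"
proof -
  have "norm (x - y) \<le> norm (T (x - y))"
    by (rule norm_le_norm_op[OF lin_op_diff_mem[OF lin_op_self_adjoint assms(1,2)]])
  also have "T (x - y) = 0" using lin_op_diff[OF lin_op_self_adjoint assms(1,2)] assms(3) by simp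
  finally show ?thesis by simp
qed

text \<open>Closed because \<open>T\<close> coincides with its adjoint.\<close>

lemma op_closed:
  assumes xD: "\<And>n. x n \<in> D" and "x \<longlonglongrightarrow> l" and Tx: "(\<lambda>n. T (x n)) \<longlonglongrightarrow> w"
  shows "l \<in> D" "T l = w"
proof -
  have eq: "cinner (T z) l = cinner z w" if "z \<in> D" for z
  proof -
    have "(\<lambda>n. cinner (T z) (x n)) \<longlonglongrightarrow> cinner (T z) l"
      by (rule tendsto_cinner_right[OF hilb \<open>x \<longlonglongrightarrow> l\<close>])
    moreover have "(\<lambda>n. cinner (T z) (x n)) = (\<lambda>n. cinner z (T (x n)))"
      using self_adjoint that xD unfolding self_adjoint_op_def by simp
    ultimately show ?thesis using tendsto_cinner_right[OF hilb Tx] LIMSEQ_unique by metis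
  qed
  then show "l \<in> D" using self_adjoint unfolding self_adjoint_op_def by blast
  have "rinner z (T l - w) = 0" if "z \<in> D" for z
    using eq[OF that] self_adjoint that \<open>l \<in> D\<close>
    by (simp add: self_adjoint_op_def cinner_rinner complex_eq_iff rinner_bilinear_simps[OF hilb])
  then have "T l - w = 0" by (rule orthogonal_dense_imp_zero[OF hilb dense_self_adjoint])
  then show "T l = w" by simp
qed

lemma closed_op_range: "closed (T ` D)"
  unfolding closed_sequential_limits
proof (intro allI impI)
  fix y l
  assume "(\<forall>n. y n \<in> T ` D) \<and> y \<longlonglongrightarrow> l"
  then have "\<forall>n. \<exists>x. x \<in> D \<and> y n = T x" and "y \<longlonglongrightarrow> l" by blast+
  then obtain x where xD: "\<And>n. x n \<in> D" and "\<And>n. y n = T (x n)" by metis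
  then have y: "y = (\<lambda>n. T (x n))" by blast
  have "Cauchy x"
    using LIMSEQ_imp_Cauchy[OF \<open>y \<longlonglongrightarrow> l\<close>] unfolding y
    by (rule Cauchy_dominated[where K=1])
      (simp add: norm_le_norm_op lin_op_diff_mem[OF lin_op_self_adjoint] xD
        flip: lin_op_diff[OF lin_op_self_adjoint xD xD])
  then obtain x0 where "x \<longlonglongrightarrow> x0" using Cauchy_convergent_iff convergent_def by blast
  moreover have "(\<lambda>n. T (x n)) \<longlonglongrightarrow> l" using \<open>y \<longlonglongrightarrow> l\<close> unfolding y .
  ultimately have "x0 \<in> D" "T x0 = l" using op_closed[of x x0 l, OF xD] by blast+
  then show "l \<in> T ` D" by blast
qed

text \<open>The range is closed and its orthogonal complement lies in the kernel of the adjoint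
  \<open>T\<close>, which is trivial because \<open>T \<ge> 1\<close>.\<close>

lemma op_surj: "y \<in> T ` D"
proof -
  let ?V = "T ` D"
  have combination: "r *\<^sub>R a + s *\<^sub>R b \<in> ?V" if ab: "a \<in> ?V" "b \<in> ?V" for a b r s
  proof -
    obtain x1 x2 where "x1 \<in> D" "x2 \<in> D" "a = T x1" "b = T x2" using ab by blast
    then have "r *\<^sub>R a + s *\<^sub>R b = T (r *\<^sub>R x1 + s *\<^sub>R x2)" "r *\<^sub>R x1 + s *\<^sub>R x2 \<in> D"
      by (simp_all add: lin_op_add[OF lin_op_self_adjoint] lin_op_scaleR[OF lin_op_self_adjoint]
          lin_op_add_mem[OF lin_op_self_adjoint] lin_op_scaleR_mem[OF lin_op_self_adjoint])
    then show ?thesis by blast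
  qed
  have line: "a + t *\<^sub>R b \<in> ?V" if "a \<in> ?V" "b \<in> ?V" for a b t
    using combination[OF that, of 1 t] by simp
  have midpoint: "(1/2) *\<^sub>R (a + b) \<in> ?V" if "a \<in> ?V" "b \<in> ?V" for a b
    using combination[OF that, of "1/2" "1/2"] by (simp add: scaleR_add_right)
  have "?V \<noteq> {}" using lin_op_zero_mem[OF lin_op_self_adjoint] by blast
  then obtain p where "p \<in> ?V" and nearest: "\<And>v. v \<in> ?V \<Longrightarrow> norm (y - p) \<le> norm (y - v)"
    using nearest_point_exists[OF hilb closed_op_range _ midpoint, of y] by blast
  have orth: "rinner (T z) (y - p) = 0" if "z \<in> D" for z
    using nearest_point_orthogonal[OF hilb nearest line[OF \<open>p \<in> ?V\<close>]] that
    by (simp add: rinner_commute)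
  have "cinner (T z) (y - p) = cinner z 0" if z: "z \<in> D" for z
  proof -
    have "rinner (T z) (\<i> *\<^sub>C (y - p)) = - rinner (T (\<i> *\<^sub>C z)) (y - p)"
      by (simp add: rinner_ii_right[OF hilb] lin_op_scaleC[OF lin_op_self_adjoint z])
    then show ?thesis
      using orth[OF z] orth[OF lin_op_scaleC_mem[OF lin_op_self_adjoint z]]
      by (simp add: cinner_rinner scaleC_zero_right)
  qed
  then have "y - p \<in> D" using self_adjoint unfolding self_adjoint_op_def by blast
  then have "(norm (y - p))\<^sup>2 \<le> 0" using norm_sq_le_form[of "y - p"] orth[of "y - p"]
    by (simp add: rinner_commute)
  then have "y - p = 0" by simp
  then show ?thesis using \<open>p \<in> ?V\<close> by simp
qed

lemma op_inverse: "op_inverse D T y \<in> D" "T (op_inverse D T y) = y"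
proof -
  have "\<exists>!x. x \<in> D \<and> T x = y" using op_surj[of y] op_inj by blast
  then have "op_inverse D T y \<in> D \<and> T (op_inverse D T y) = y"
    unfolding op_inverse_def by (rule theI')
  then show "op_inverse D T y \<in> D" "T (op_inverse D T y) = y" by blast+
qed

lemma op_inverse_op: "x \<in> D \<Longrightarrow> op_inverse D T (T x) = x"
  using op_inj op_inverse by blast

lemma op_inverse_linear:
  "op_inverse D T (a + b) = op_inverse D T a + op_inverse D T b"
  "op_inverse D T (c *\<^sub>C a) = c *\<^sub>C op_inverse D T a"
  using op_inverse_op[OF lin_op_add_mem[OF lin_op_self_adjoint op_inverse(1) op_inverse(1)]]
    op_inverse_op[OF lin_op_scaleC_mem[OF lin_op_self_adjoint op_inverse(1)]]
    lin_op_add[OF lin_op_self_adjoint op_inverse(1) op_inverse(1)]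
    lin_op_scaleC[OF lin_op_self_adjoint op_inverse(1)]
  by (simp_all add: op_inverse(2))

lemma bounded_linear_op_inverse: "bounded_linear (op_inverse D T)"
proof (rule bounded_linear_intro[where K=1])
  show "op_inverse D T (r *\<^sub>R x) = r *\<^sub>R op_inverse D T x" for r x
    using op_inverse_linear(2)[of "of_real r" x] by (simp add: scaleC_of_real)
  show "norm (op_inverse D T x) \<le> norm x * 1" for x
    using norm_le_norm_op[OF op_inverse(1)] by (simp add: op_inverse(2))
qed (rule op_inverse_linear(1))

lemma symmetric_op_inverse: "symmetric_op (op_inverse D T)"
  unfolding symmetric_op_def
proof (intro allI)
  fix x y
  have "rinner (T (op_inverse D T x)) (op_inverse D T y) = rinner (op_inverse D T x) (T (op_inverse D T y))"
    by (rule rinner_self_adjoint[OF op_inverse(1) op_inverse(1)])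
  then show "rinner x (op_inverse D T y) = rinner (op_inverse D T x) y" by (simp add: op_inverse(2))
qed

lemma positive_op_inverse: "positive_op (op_inverse D T)"
  unfolding positive_op_def
proof
  fix y
  have "0 \<le> (norm (op_inverse D T y))\<^sup>2" by simp
  also have "\<dots> \<le> rinner (op_inverse D T y) (T (op_inverse D T y))"
    by (rule norm_sq_le_form[OF op_inverse(1)])
  finally show "0 \<le> rinner y (op_inverse D T y)" by (simp add: op_inverse(2) rinner_commute)
qed

lemma inv_sqrt_op_props:
  "bounded_linear (inv_sqrt_op D T) \<and> symmetric_op (inv_sqrt_op D T)
     \<and> (\<forall>x. inv_sqrt_op D T (inv_sqrt_op D T x) = op_inverse D T x)"
proof -
  obtain S where blS: "bounded_linear S" and symS: "symmetric_op S" and posS: "positive_op S"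
    and SS: "\<And>x. S (S x) = op_inverse D T x"
    and commute: "\<And>C x. bounded_linear C \<Longrightarrow> (\<And>y. C (op_inverse D T y) = op_inverse D T (C y))
        \<Longrightarrow> C (S x) = S (C x)"
    using positive_op_sqrt_exists[OF hilb bounded_linear_op_inverse symmetric_op_inverse
        positive_op_inverse] by blast
  have "inv_sqrt_op D T = S"
    unfolding inv_sqrt_op_def
  proof (rule the_equality)
    have "\<i> *\<^sub>C S x = S (\<i> *\<^sub>C x)" for x
      by (rule commute[OF bounded_linear_scaleC]) (simp add: op_inverse_linear(2))
    then show "bounded_linear S \<and> (\<forall>x. cinner x (S x) \<in> \<real> \<and> 0 \<le> Re (cinner x (S x)))
        \<and> (\<forall>x. S (S x) \<in> D \<and> T (S (S x)) = x)"
      using blS posS cinner_real_if_commutes_ii[OF hilb symS]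
      by (simp add: SS op_inverse positive_op_def cinner_rinner)
    fix S'
    assume S': "bounded_linear S' \<and> (\<forall>x. cinner x (S' x) \<in> \<real> \<and> 0 \<le> Re (cinner x (S' x)))
        \<and> (\<forall>x. S' (S' x) \<in> D \<and> T (S' (S' x)) = x)"
    show "S' = S"
    proof (rule positive_op_sqrt_unique[OF hilb blS symS posS SS commute])
      show "y = 0" if "op_inverse D T y = 0" for y
        using op_inverse(2)[of y] that by (simp add: lin_op_zero[OF lin_op_self_adjoint])
      show "bounded_linear S'" "positive_op S'"
        using S' by (simp_all add: positive_op_def cinner_rinner)
      show "S' (S' x) = op_inverse D T x" for x
        using S' op_inverse_op[of "S' (S' x)"] by simp
    qed
  qed
  then show ?thesis using blS symS SS by simp
qed

end

section \<open>The perturbation estimate\<close>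

lemma factor_through_dense_range:
  fixes S0 F R U :: "'a::banach \<Rightarrow> 'a"
  assumes "bounded_linear S0" and "bounded_linear F" and "linear R"
    and U_diff: "\<And>v w. U (v - w) = U v - U w"
    and U_bound: "\<And>v. norm (U v) \<le> k * norm (R v)"
    and S0_U: "\<And>v. S0 (U v) = F (R v)"
    and "x \<in> closure (range R)"
  shows "\<exists>u. F x = S0 u \<and> norm u \<le> k * norm x"
proof -
  obtain s where s: "\<And>n. s n \<in> range R" "s \<longlonglongrightarrow> x"
    using \<open>x \<in> closure (range R)\<close> unfolding closure_sequential by blast
  then have "\<forall>n. \<exists>v. s n = R v" by blast
  then obtain v where "\<And>n. s n = R (v n)" by metis
  then have "s = (\<lambda>n. R (v n))" by (rule ext)
  with s(2) have Rv: "(\<lambda>n. R (v n)) \<longlonglongrightarrow> x" by simp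
  have "norm (U (v m) - U (v n)) \<le> k * norm (R (v m) - R (v n))" for m n
    using U_bound[of "v m - v n"] by (simp add: linear_diff[OF \<open>linear R\<close>] flip: U_diff)
  with LIMSEQ_imp_Cauchy[OF Rv] have "Cauchy (\<lambda>n. U (v n))"
    by (rule Cauchy_dominated)
  then obtain u where Uv: "(\<lambda>n. U (v n)) \<longlonglongrightarrow> u"
    using Cauchy_convergent_iff convergent_def by blast
  have "(\<lambda>n. S0 (U (v n))) \<longlonglongrightarrow> S0 u" by (rule bounded_linear.tendsto[OF assms(1) Uv])
  moreover have "(\<lambda>n. S0 (U (v n))) \<longlonglongrightarrow> F x"
    unfolding S0_U by (rule bounded_linear.tendsto[OF assms(2) Rv])
  ultimately have "F x = S0 u" using LIMSEQ_unique by blast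
  moreover have "norm u \<le> k * norm x"
    by (rule LIMSEQ_le[OF tendsto_norm[OF Uv] tendsto_mult_left[OF tendsto_norm[OF Rv]]])
      (simp add: U_bound)
  ultimately show ?thesis by blast
qed

context
  assumes hilb: "hilbert_norm TYPE('a::{complex_normed_vector,banach})"
begin

text \<open>With \<open>S\<^sub>0 = H\<^sub>0\<^sup>-\<^sup>1\<^sup>/\<^sup>2\<close>, the vector \<open>S\<^sub>0 (H\<^sub>0 z)\<close> plays the role of \<open>H\<^sub>0\<^sup>1\<^sup>/\<^sup>2 z\<close>:
  \<open>\<parallel>H\<^sub>0\<^sup>1\<^sup>/\<^sup>2 z\<parallel>\<^sup>2 = \<langle>z, H z\<rangle> - c \<langle>z, H\<^sub>1 z\<rangle>\<close> and \<open>|\<langle>z, H\<^sub>1 z\<rangle>| \<le> C \<parallel>z\<parallel> \<parallel>H\<^sub>0\<^sup>1\<^sup>/\<^sup>2 z\<parallel>\<close>;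
  the cross term is absorbed by AM-GM and \<open>\<parallel>z\<parallel>\<^sup>2 \<le> \<langle>z, H z\<rangle>\<close>.\<close>

lemma perturbed_form_bound:
  fixes S0 H0 H1 H :: "'a \<Rightarrow> 'a" and D0 :: "'a set"
  assumes symS0: "symmetric_op S0" and S0_H0: "\<And>z. z \<in> D0 \<Longrightarrow> S0 (S0 (H0 z)) = z"
    and H: "\<And>z. H z = H0 z + c *\<^sub>R H1 z"
    and H1_bound: "\<And>x. norm (H1 (S0 x)) \<le> C * norm x" and "C \<ge> 0" and "\<bar>c\<bar> \<le> Cc"
    and H_ge: "\<And>z. z \<in> D0 \<Longrightarrow> (norm z)\<^sup>2 \<le> rinner z (H z)"
    and "z \<in> D0"
  shows "(norm (S0 (H0 z)))\<^sup>2 \<le> (2 + (Cc * C)\<^sup>2) * rinner z (H z)"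
proof -
  let ?a = "norm (S0 (H0 z))" and ?h = "rinner z (H z)"
  have z: "z = S0 (S0 (H0 z))" using S0_H0[OF \<open>z \<in> D0\<close>] by simp
  have "rinner (S0 (H0 z)) (S0 (H0 z)) = rinner (S0 (S0 (H0 z))) (H0 z)"
    using symS0 unfolding symmetric_op_def by blast
  then have "rinner z (H0 z) = rinner (S0 (H0 z)) (S0 (H0 z))" using z by simp
  then have h: "?h = ?a\<^sup>2 + c * rinner z (H1 z)"
    by (simp add: H rinner_add_right[OF hilb] rinner_scaleR_right[OF hilb] rinner_self)
  have "\<bar>rinner z (H1 z)\<bar> \<le> norm z * (C * ?a)"
    using abs_rinner_le[of z "H1 z"] mult_left_mono[OF H1_bound[of "S0 (H0 z)"], of "norm z"] z
    by simp
  then have "\<bar>c * rinner z (H1 z)\<bar> \<le> Cc * (norm z * (C * ?a))"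
    unfolding abs_mult using \<open>\<bar>c\<bar> \<le> Cc\<close> by (intro mult_mono) auto
  then have "?a\<^sup>2 \<le> ?h + (Cc * C * norm z) * ?a" using h by (simp add: algebra_simps abs_le_iff)
  moreover have "(Cc * C * norm z) * ?a \<le> ((Cc * C * norm z)\<^sup>2 + ?a\<^sup>2) / 2"
    using sum_squares_bound[of "Cc * C * norm z" ?a] by (simp add: power2_eq_square field_simps)
  moreover have "(Cc * C * norm z)\<^sup>2 \<le> (Cc * C)\<^sup>2 * ?h"
    using H_ge[OF \<open>z \<in> D0\<close>] by (simp add: power_mult_distrib mult_left_mono)
  ultimately show ?thesis by (simp add: algebra_simps)
qed

text \<open>The form bound says \<open>\<parallel>H\<^sub>0\<^sup>1\<^sup>/\<^sup>2 H\<^sup>-\<^sup>1\<^sup>/\<^sup>2 w\<parallel> \<le> \<surd>K \<parallel>w\<parallel>\<close> on \<open>w \<in> range H\<^sup>-\<^sup>1\<^sup>/\<^sup>2\<close>,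
  a dense set; extending by continuity factors \<open>H\<^sup>-\<^sup>1\<^sup>/\<^sup>2\<close> through \<open>H\<^sub>0\<^sup>-\<^sup>1\<^sup>/\<^sup>2\<close>.\<close>

lemma inv_sqrt_op_perturbation_factor:
  fixes D0 :: "'a set" and H0 H1 H :: "'a \<Rightarrow> 'a"
  assumes H0: "self_adjoint_op D0 H0" "op_ge D0 H0 1"
    and H: "self_adjoint_op D0 H" "op_ge D0 H 1" "\<And>z. H z = H0 z + c *\<^sub>R H1 z"
    and H1_bound: "\<And>x. norm (H1 (inv_sqrt_op D0 H0 x)) \<le> C * norm x" and "C \<ge> 0"
    and "\<bar>c\<bar> \<le> Cc"
  obtains u where "inv_sqrt_op D0 H x = inv_sqrt_op D0 H0 u" "norm u \<le> sqrt (2 + (Cc * C)\<^sup>2) * norm x"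
proof -
  let ?K = "2 + (Cc * C)\<^sup>2"
  define S0 where "S0 = inv_sqrt_op D0 H0"
  define S where "S = inv_sqrt_op D0 H"
  note S0_props = inv_sqrt_op_props[OF hilb H0, folded S0_def]
  note S_props = inv_sqrt_op_props[OF hilb H(1,2), folded S_def]
  have S0_H0: "S0 (S0 (H0 z)) = z" if "z \<in> D0" for z
    using S0_props op_inverse_op[OF hilb H0 that] by simp
  have SS: "S (S v) \<in> D0" "H (S (S v)) = v" for v
    using S_props op_inverse[OF hilb H(1,2)] by simp_all
  define U where "U v = S0 (H0 (S (S v)))" for v
  have "\<exists>u. S x = S0 u \<and> norm u \<le> sqrt ?K * norm x"
  proof (rule factor_through_dense_range)
    show "bounded_linear S0" "bounded_linear S" "linear S"
      using S0_props S_props bounded_linear.linear by blast+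
    show "U (v - w) = U v - U w" for v w
      using S0_props S_props SS(1) unfolding U_def
      by (simp add: linear_diff bounded_linear.linear lin_op_diff[OF lin_op_self_adjoint[OF hilb H0]])
    show "norm (U v) \<le> sqrt ?K * norm (S v)" for v
    proof (rule power2_le_imp_le)
      have "(norm (U v))\<^sup>2 \<le> ?K * rinner (S (S v)) (H (S (S v)))"
        unfolding U_def
        by (rule perturbed_form_bound[OF _ S0_H0 H(3) H1_bound[folded S0_def] \<open>C \<ge> 0\<close>
              \<open>\<bar>c\<bar> \<le> Cc\<close> _ SS(1)])
          (use S0_props norm_sq_le_form[OF hilb H(1,2)] in auto)
      also have "rinner (S (S v)) (H (S (S v))) = rinner (S v) (S v)"
        using S_props SS(2) unfolding symmetric_op_def by simp
      finally show "(norm (U v))\<^sup>2 \<le> (sqrt ?K * norm (S v))\<^sup>2"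
        by (simp add: power_mult_distrib rinner_self)
    qed simp
    show "S0 (U v) = S (S v)" for v unfolding U_def using S0_H0 SS(1) .
    have "D0 \<subseteq> range S"
    proof
      fix z
      assume "z \<in> D0"
      then have "z = S (S (H z))" using S_props op_inverse_op[OF hilb H(1,2)] by simp
      then show "z \<in> range S" by blast
    qed
    then show "x \<in> closure (range S)"
      using closure_mono dense_self_adjoint[OF hilb H(1,2)] by blast
  qed
  then show thesis using that unfolding S0_def S_def by blast
qed

lemma inv_sqrt_op_perturbation_bound:
  fixes D0 :: "'a set" and H0 H1 H :: "'a \<Rightarrow> 'a"
  assumes H0: "self_adjoint_op D0 H0" "op_ge D0 H0 1"
    and H: "self_adjoint_op D0 H" "op_ge D0 H 1" "\<And>z. H z = H0 z + c *\<^sub>R H1 z"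
    and H1_bound: "\<And>x. norm (H1 (inv_sqrt_op D0 H0 x)) \<le> C * norm x" and "C \<ge> 0"
    and "\<bar>c\<bar> \<le> Cc"
  shows "range (inv_sqrt_op D0 H) \<subseteq> range (inv_sqrt_op D0 H0)"
    and "norm (H1 (inv_sqrt_op D0 H x)) \<le> C * sqrt (2 + (Cc * C)\<^sup>2) * norm x"
proof -
  note factor = inv_sqrt_op_perturbation_factor[OF H0 H H1_bound \<open>C \<ge> 0\<close> \<open>\<bar>c\<bar> \<le> Cc\<close>]
  show "range (inv_sqrt_op D0 H) \<subseteq> range (inv_sqrt_op D0 H0)"
    by (metis factor image_subsetI rangeI)
  obtain u where "inv_sqrt_op D0 H x = inv_sqrt_op D0 H0 u" "norm u \<le> sqrt (2 + (Cc * C)\<^sup>2) * norm x"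
    by (rule factor)
  then show "norm (H1 (inv_sqrt_op D0 H x)) \<le> C * sqrt (2 + (Cc * C)\<^sup>2) * norm x"
    using H1_bound[of u] mult_left_mono[OF _ \<open>C \<ge> 0\<close>] by (simp add: mult.assoc) (meson order_trans)
qed

end

lemma op_ge_mono:
  assumes "op_ge D T c" and "c' \<le> c"
  shows "op_ge D T c'"
  unfolding op_ge_def
proof
  fix x
  assume "x \<in> D"
  have "c' * (norm x)\<^sup>2 \<le> c * (norm x)\<^sup>2" using assms(2) by (simp add: mult_right_mono)
  also have "\<dots> \<le> Re (cinner x (T x))" using assms(1) \<open>x \<in> D\<close> unfolding op_ge_def by blast
  finally show "c' * (norm x)\<^sup>2 \<le> Re (cinner x (T x))" .
qed

lemma abs_le_SUP_unit_interval:
  fixes g :: "real \<Rightarrow> real"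
  assumes C1: "g C1_differentiable_on UNIV"
    and supp: "closure {s. deriv g s \<noteq> 0} \<subseteq> {0<..<1}"
    and zero: "\<And>s. s < 0 \<Longrightarrow> g s = 0"
  shows "\<bar>g s\<bar> \<le> (SUP s\<in>{0..1}. \<bar>g s\<bar>)"
proof -
  obtain g' where g': "\<And>x. (g has_vector_derivative g' x) (at x)"
    using C1 unfolding C1_differentiable_on_def by blast
  have deriv: "(g has_real_derivative deriv g x) (at x)" for x
    using g'[of x] DERIV_imp_deriv by (metis has_real_derivative_iff_has_vector_derivative)
  have cont: "continuous_on UNIV g"
    by (rule differentiable_imp_continuous_on[OF C1_diff_imp_diff[OF C1]])
  have "compact ((\<lambda>s. \<bar>g s\<bar>) ` {0..1::real})"
    by (rule compact_continuous_image) (auto intro!: continuous_intros continuous_on_subset[OF cont])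
  then have "bdd_above ((\<lambda>s. \<bar>g s\<bar>) ` {0..1})"
    by (intro bounded_imp_bdd_above compact_imp_bounded)
  then have on_01: "\<bar>g s\<bar> \<le> (SUP s\<in>{0..1}. \<bar>g s\<bar>)" if "s \<in> {0..1}" for s
    by (rule cSUP_upper[OF that])
  consider "s < 0" | "s \<in> {0..1}" | "1 < s"
    by (cases "s < 0"; cases "s \<le> 1") auto
  then show ?thesis
  proof cases
    case 1
    then show ?thesis using on_01[of 0] zero[of s] by simp
  next
    case 2
    then show ?thesis by (rule on_01)
  next
    case 3
    obtain z where "1 < z" "g s - g 1 = (s - 1) * deriv g z"
      using MVT2[of 1 s g "deriv g"] deriv \<open>1 < s\<close> by auto
    moreover have "deriv g z = 0"
    proof (rule ccontr)
      assume "deriv g z \<noteq> 0"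
      then have "z \<in> closure {s. deriv g s \<noteq> 0}"
        by (intro closure_subset[THEN subsetD]) simp
      then have "z \<in> {0<..<1}" using supp by (rule subsetD[rotated])
      with \<open>1 < z\<close> show False by simp
    qed
    ultimately have "g s = g 1" by simp
    then show ?thesis using on_01[of 1] by simp
  qed
qed

theorem mainTheorem3:
  fixes D0 D1 :: "'a::{complex_normed_vector,banach} set"
    and H0 H1 :: "'a \<Rightarrow> 'a"
    and g :: "real \<Rightarrow> real"
    and \<gamma>0 M \<epsilon>s :: real
  assumes hilb: "hilbert_norm TYPE('a)"
    and sep: "separable_carrier TYPE('a)"
    and H0_sa: "self_adjoint_op D0 H0"
    and \<gamma>0_pos: "\<gamma>0 > 0"
    and H0_ge: "op_ge D0 H0 (1 + \<gamma>0)"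
    and H1_sa: "self_adjoint_op D1 H1"
    and H1_dom: "range (inv_sqrt_op D0 H0) \<subseteq> D1"
    and H1_rel: "\<exists>C. \<forall>x. norm (H1 (inv_sqrt_op D0 H0 x)) \<le> C * norm x"
    and g_C1: "g C1_differentiable_on UNIV"
    and g_supp: "closure {s. deriv g s \<noteq> 0} \<subseteq> {0<..<1}"
    and g_neg: "\<And>s. s < 0 \<Longrightarrow> g s = 0"
    and M_def: "M = (SUP s\<in>{0..1}. \<bar>g s\<bar>)"
    and \<epsilon>s_pos: "\<epsilon>s > 0"
    and \<epsilon>s_small: "(3 * \<gamma>0 + 1) / \<gamma>0 * \<epsilon>s * M
        * onorm (\<lambda>x. H1 (inv_sqrt_op D0 H0 (inv_sqrt_op D0 H0 x))) < 1"
    and H_sa: "\<And>\<epsilon> \<eta> t. 0 < \<epsilon> \<Longrightarrow> \<epsilon> \<le> \<epsilon>s \<Longrightarrow> 0 < \<eta> \<Longrightarrow>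
        self_adjoint_op D0 (Hpert H0 H1 g \<epsilon> \<eta> t)"
    and H_ge: "\<And>\<epsilon> \<eta> t. 0 < \<epsilon> \<Longrightarrow> \<epsilon> \<le> \<epsilon>s \<Longrightarrow> 0 < \<eta> \<Longrightarrow>
        op_ge D0 (Hpert H0 H1 g \<epsilon> \<eta> t) 1"
  shows "\<exists>a b0 b1. a \<ge> 0 \<and> b0 \<ge> 0 \<and> b1 \<ge> 0 \<and>
    (\<forall>\<epsilon> \<eta> t. 0 < \<epsilon> \<and> \<epsilon> \<le> \<epsilon>s \<and> 0 < \<eta> \<longrightarrow>
       range (inv_sqrt_op D0 (Hpert H0 H1 g \<epsilon> \<eta> t)) \<subseteq> D1 \<and>
       (\<forall>x. norm (H1 (inv_sqrt_op D0 (Hpert H0 H1 g \<epsilon> \<eta> t) x)) \<le> (a + b0 + b1 * \<epsilon>) * norm x))"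
proof -
  have H0_ge1: "op_ge D0 H0 1" using op_ge_mono[OF H0_ge] \<gamma>0_pos by simp
  obtain C where "C \<ge> 0" and C: "\<And>x. norm (H1 (inv_sqrt_op D0 H0 x)) \<le> C * norm x"
    using H1_rel by (metis abs_ge_self abs_ge_zero mult_right_mono norm_ge_zero order_trans)
  have g_le: "\<bar>g s\<bar> \<le> M" for s
    unfolding M_def by (rule abs_le_SUP_unit_interval[OF g_C1 g_supp g_neg])
  define a where "a = C * sqrt (2 + (\<epsilon>s * M * C)\<^sup>2)"
  have "range (inv_sqrt_op D0 (Hpert H0 H1 g \<epsilon> \<eta> t)) \<subseteq> D1 \<and>
      (\<forall>x. norm (H1 (inv_sqrt_op D0 (Hpert H0 H1 g \<epsilon> \<eta> t) x)) \<le> a * norm x)"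
    if "0 < \<epsilon>" "\<epsilon> \<le> \<epsilon>s" "0 < \<eta>" for \<epsilon> \<eta> t
  proof -
    have c_le: "\<bar>\<epsilon> * g (\<eta> * t)\<bar> \<le> \<epsilon>s * M"
      unfolding abs_mult using that g_le[of "\<eta> * t"] by (intro mult_mono) auto
    have H_eq: "Hpert H0 H1 g \<epsilon> \<eta> t z = H0 z + (\<epsilon> * g (\<eta> * t)) *\<^sub>R H1 z" for z
      by (simp add: Hpert_def)
    note bound = inv_sqrt_op_perturbation_bound[OF hilb H0_sa H0_ge1 H_sa[OF that] H_ge[OF that]
        H_eq C \<open>C \<ge> 0\<close> c_le]
    show ?thesis
      using order_trans[OF bound(1) H1_dom] bound(2) unfolding a_def by blast
  qed
  then show ?thesis using \<open>C \<ge> 0\<close> by (intro exI[of _ a] exI[of _ 0]) (auto simp: a_def)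
qed

end
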